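(* Let $\theta>0$, $n\ge2$, $b\in\{2,\ldots,n\}$, and integers $r_2,\ldots,r_b\ge0$ with $m:=2r_2+3r_3+\cdots+br_b$. Then $$\mathbb{E}\Big(\tilde C_2(n)^{[r_2]}\cdots\tilde C_b(n)^{[r_b]}\Big)=\mathbf{1}(m\le n)\,\frac{n!}{\lambda_n(\theta)\,\theta_{(n)}}\cdot\frac{\lambda_{n-m}(\theta)\,\theta_{(n-m)}}{(n-m)!}\prod_{j=2}^b\Big(\frac{\theta}{j}\Big)^{r_j}.$$ In particular, for $j=2,\ldots,n$, $\mathbb{E}\tilde C_j(n)=\frac{n!}{\lambda_n(\theta)\theta_{(n)}}\cdot\frac{\lambda_{n-j}(\theta)\theta_{(n-j)}}{(n-j)!}\cdot\frac{\theta}{j}$.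
   Context: Fix $\theta>0$. Write $\theta_{(0)}=1$ and $\theta_{(m)}=\theta(\theta+1)\cdots(\theta+m-1)$ for $m\ge1$. $\mathrm{ESF}(\theta)$ is the law of $(C_1(n),\ldots,C_n(n))$ with $\mathbb{P}(C_j(n)=c_j,\,1\le j\le n)=\frac{n!}{\theta_{(n)}}\prod_{j=1}^n(\theta/j)^{c_j}/c_j!$ whenever $\sum_j jc_j=n$ (cycle counts of a random permutation of $\{1,\ldots,n\}$ chosen with probability $\theta^k/\theta_{(n)}$ when it has $k$ cycles). For $n\ge1$, $\lambda_n(\theta)=\mathbb{P}(C_1(n)=0)=\frac{n!}{\theta_{(n)}}\sum_{j=0}^n(-1)^j\frac{\theta^j}{j!}\frac{\theta_{(n-j)}}{(n-j)!}$, and $\lambda_0(\theta)=1$ (so $\lambda_1(\theta)=0$). The derangement cycle counts $(\tilde C_2(n),\ldots,\tilde C_n(n))$ have the law of $(C_2(n),\ldots,C_n(n))$ conditioned on $C_1(n)=0$. For an integer-valued $X$ and $k\ge0$, $X^{[k]}=X(X-1)\cdots(X-k+1)$ denotes the falling factorial, with $X^{[0]}=1$. *)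

theory Defs
  imports Complex_Main
begin

text \<open>Rising factorial theta_(m) is the library's pochhammer theta m.\<close>

definition falling_fact :: "nat \<Rightarrow> nat \<Rightarrow> real" where
  "falling_fact X k = (\<Prod>i<k. (real X - real i))"

definition cycle_vecs :: "nat \<Rightarrow> (nat \<Rightarrow> nat) set" where
  "cycle_vecs n = {c. (\<forall>j. c j \<noteq> 0 \<longrightarrow> 1 \<le> j \<and> j \<le> n) \<and> (\<Sum>j=1..n. j * c j) = n}"

text \<open>ESF(theta) probability mass of the cycle-count vector c.\<close>
definition esf_prob :: "real \<Rightarrow> nat \<Rightarrow> (nat \<Rightarrow> nat) \<Rightarrow> real" where
  "esf_prob \<theta> n c =
     (if c \<in> cycle_vecs n then
        fact n / pochhammer \<theta> n * (\<Prod>j=1..n. (\<theta> / real j) ^ c j / fact (c j))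
      else 0)"

text \<open>lambda_n(theta) = P(C_1(n) = 0), via the explicit formula (which gives lambda_0 = 1).\<close>
definition esf_lambda :: "real \<Rightarrow> nat \<Rightarrow> real" where
  "esf_lambda \<theta> n =
     fact n / pochhammer \<theta> n *
       (\<Sum>j=0..n. (-1) ^ j * \<theta> ^ j / fact j * pochhammer \<theta> (n - j) / fact (n - j))"

text \<open>Expectation of F(C~_2(n),...,C~_n(n)) for the derangement cycle counts, i.e.
  of F(C) under ESF(theta) conditioned on C_1(n) = 0.\<close>
definition derange_expect :: "real \<Rightarrow> nat \<Rightarrow> ((nat \<Rightarrow> nat) \<Rightarrow> real) \<Rightarrow> real" where
  "derange_expect \<theta> n F =
     (\<Sum>c\<in>{c\<in>cycle_vecs n. c 1 = 0}. esf_prob \<theta> n c * F c) /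
     (\<Sum>c\<in>{c\<in>cycle_vecs n. c 1 = 0}. esf_prob \<theta> n c)"

end

theory Submission imports Defs begin

text \<open>Up to the factor \<open>n!/\<theta>\<^sub>(\<^sub>n\<^sub>)\<close>, the ESF probability of a cycle vector \<open>c\<close> is the product
  weight \<open>\<Prod>\<^sub>j (\<theta>/j)^c\<^sub>j / c\<^sub>j!\<close>. Multiplying it by the falling factorials \<open>c\<^sub>j\<^sup>[\<^sup>r\<^sup>j\<^sup>]\<close> and shifting
  \<open>c\<^sub>j \<mapsto> c\<^sub>j - r\<^sub>j\<close> turns a factorial moment over derangement vectors of size \<open>n\<close> into
  \<open>\<Prod>\<^sub>j (\<theta>/j)^r\<^sub>j\<close> times \<open>W(n - m)\<close>, where \<open>W(k)\<close> is the total weight of the derangement vectors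
  of size \<open>k\<close>. Weighting the first moments by \<open>j\<close> gives \<open>k W(k) = \<theta> \<Sum>\<^sub>j\<^sub>=\<^sub>2\<^sub>.\<^sub>.\<^sub>k W(k - j)\<close>, hence
  \<open>(k+2) W(k+2) = (k+1) W(k+1) + \<theta> W(k)\<close>. The coefficients of \<open>e\<^sup>-\<^sup>\<theta>\<^sup>x (1-x)\<^sup>-\<^sup>\<theta>\<close>, which are
  \<open>\<lambda>\<^sub>k \<theta>\<^sub>(\<^sub>k\<^sub>) / k!\<close>, satisfy the same recursion and initial values, so \<open>W(k) = \<lambda>\<^sub>k \<theta>\<^sub>(\<^sub>k\<^sub>) / k!\<close>.\<close>

definition cycle_weight :: "real \<Rightarrow> nat \<Rightarrow> (nat \<Rightarrow> nat) \<Rightarrow> real" where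
  "cycle_weight \<theta> N c = (\<Prod>j=1..N. (\<theta> / real j) ^ c j / fact (c j))"

definition derangement_vecs :: "nat \<Rightarrow> (nat \<Rightarrow> nat) set" where
  "derangement_vecs k = {c \<in> cycle_vecs k. c 1 = 0}"

definition derangement_weight :: "real \<Rightarrow> nat \<Rightarrow> real" where
  "derangement_weight \<theta> k = (\<Sum>c\<in>derangement_vecs k. cycle_weight \<theta> k c)"

lemma cycle_vecs_le:
  assumes "c \<in> cycle_vecs k" shows "c j \<le> k"
proof (cases "c j = 0")
  case False
  then have j: "1 \<le> j" "j \<le> k" using assms by (auto simp: cycle_vecs_def)
  have "c j \<le> j * c j" using j(1) by simp
  also have "j * c j \<le> (\<Sum>i=1..k. i * c i)" by (rule member_le_sum) (use j in auto)
  also have "\<dots> = k" using assms by (simp add: cycle_vecs_def)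
  finally show ?thesis .
qed simp

lemma finite_cycle_vecs: "finite (cycle_vecs k)"
proof (rule finite_subset)
  show "cycle_vecs k \<subseteq> {f. \<forall>x. (x \<in> {1..k} \<longrightarrow> f x \<in> {0..k}) \<and> (x \<notin> {1..k} \<longrightarrow> f x = 0)}"
  proof
    fix c assume c: "c \<in> cycle_vecs k"
    then have "c x = 0" if "x \<notin> {1..k}" for x using that by (auto simp: cycle_vecs_def)
    with cycle_vecs_le[OF c] show "c \<in> {f. \<forall>x. (x \<in> {1..k} \<longrightarrow> f x \<in> {0..k}) \<and> (x \<notin> {1..k} \<longrightarrow> f x = 0)}"
      by simp
  qed
  show "finite \<dots>" by (rule finite_set_of_finite_funs) auto
qed

lemma finite_derangement_vecs: "finite (derangement_vecs k)"
  unfolding derangement_vecs_def using finite_cycle_vecs by simp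

lemma cycle_weight_cycle_vecs_mono:
  assumes "c \<in> cycle_vecs k" "k \<le> N"
  shows "cycle_weight \<theta> N c = cycle_weight \<theta> k c"
proof -
  have "c i = 0" if "k < i" for i using assms that by (auto simp: cycle_vecs_def)
  then show ?thesis
    unfolding cycle_weight_def by (intro prod.mono_neutral_right) (use assms in auto)
qed

lemma cycle_weight_pos: "\<theta> > 0 \<Longrightarrow> cycle_weight \<theta> N c > 0"
  unfolding cycle_weight_def by (intro prod_pos) auto

lemma falling_fact_eq_fact_div: "k \<le> X \<Longrightarrow> falling_fact X k = fact X / fact (X - k)"
proof (induction k)
  case 0 then show ?case by (simp add: falling_fact_def)
next
  case (Suc k)
  have "X - k = Suc (X - Suc k)" using Suc.prems by simp
  then have fx: "(fact (X - k) :: real) = fact (X - Suc k) * (real X - real k)"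
    using Suc.prems by (simp add: of_nat_diff)
  have "falling_fact X (Suc k) = fact X / fact (X - k) * (real X - real k)"
    using Suc by (simp add: falling_fact_def)
  also have "\<dots> = fact X / fact (X - Suc k)" unfolding fx using Suc.prems by simp
  finally show ?case .
qed

lemma falling_fact_eq_0: "X < k \<Longrightarrow> falling_fact X k = 0"
  unfolding falling_fact_def by (rule prod_zero) auto

lemma falling_fact_0 [simp]: "falling_fact X 0 = 1"
  by (simp add: falling_fact_def)

lemma falling_fact_1 [simp]: "falling_fact X (Suc 0) = real X"
  by (simp add: falling_fact_def)

lemma prod_falling_fact_eq_0:
  assumes "j \<in> A" "finite A" "c j < R j"
  shows "(\<Prod>i\<in>A. falling_fact (c i) (R i)) = 0"
  using assms falling_fact_eq_0[OF assms(3)] by (intro prod_zero bexI[of _ j]) simp_all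

lemma power_div_fact_mult_falling_fact:
  assumes "r \<le> x"
  shows "a ^ x / fact x * falling_fact x r = a ^ r * (a ^ (x - r) / fact (x - r))"
proof -
  have "a ^ x = a ^ r * a ^ (x - r)" using assms by (simp flip: power_add)
  then show ?thesis using assms by (simp add: falling_fact_eq_fact_div)
qed

subsection \<open>Factorial moments over derangements\<close>

lemma derangement_vecs_sum_le:
  assumes "c \<in> derangement_vecs n" "\<And>j. R j \<le> c j"
  shows "(\<Sum>j=1..n. j * R j) \<le> n"
proof -
  have "(\<Sum>j=1..n. j * R j) \<le> (\<Sum>j=1..n. j * c j)" by (rule sum_mono) (simp add: assms(2))
  also have "\<dots> = n" using assms(1) by (simp add: derangement_vecs_def cycle_vecs_def)
  finally show ?thesis .
qed

lemma derangement_vecs_diff: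
  assumes c: "c \<in> derangement_vecs n" and le: "\<And>j. R j \<le> c j"
  defines "m \<equiv> \<Sum>j=1..n. j * R j"
  shows "(\<lambda>j. c j - R j) \<in> derangement_vecs (n - m)"
proof -
  have cv: "c \<in> cycle_vecs n" "c 1 = 0" using c by (auto simp: derangement_vecs_def)
  have "(\<Sum>i=1..n. i * (c i - R i)) = (\<Sum>i=1..n. i * c i - i * R i)"
    by (simp add: diff_mult_distrib2)
  also have "\<dots> = (\<Sum>i=1..n. i * c i) - m" unfolding m_def
    by (rule sum_subtractf_nat) (use le in auto)
  also have "\<dots> = n - m" using cv by (simp add: cycle_vecs_def)
  finally have s: "(\<Sum>i=1..n. i * (c i - R i)) = n - m" .
  have supp: "1 \<le> i \<and> i \<le> n - m" if "c i - R i \<noteq> 0" for i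
  proof -
    have i: "1 \<le> i" "i \<le> n" using that cv by (auto simp: cycle_vecs_def)
    have "i * 1 \<le> i * (c i - R i)" using that by (intro mult_le_mono2) auto
    also have "\<dots> \<le> (\<Sum>i=1..n. i * (c i - R i))" by (rule member_le_sum) (use i in auto)
    finally show ?thesis using s i by simp
  qed
  have "c i - R i = 0" if "n - m < i" for i
    using supp[of i] that by (cases "c i - R i = 0") auto
  then have "(\<Sum>i=1..n-m. i * (c i - R i)) = (\<Sum>i=1..n. i * (c i - R i))"
    by (intro sum.mono_neutral_left) auto
  with s have "(\<Sum>i=1..n-m. i * (c i - R i)) = n - m" by simp
  moreover have "\<forall>j. c j - R j \<noteq> 0 \<longrightarrow> 1 \<le> j \<and> j \<le> n - m" using supp by blast
  ultimately show ?thesis using cv(2) by (simp add: derangement_vecs_def cycle_vecs_def)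
qed

lemma derangement_vecs_add:
  assumes c: "c \<in> derangement_vecs (n - m)" and "m \<le> n"
    and supp: "\<And>j. R j \<noteq> 0 \<Longrightarrow> 2 \<le> j \<and> j \<le> n"
    and m: "m = (\<Sum>j=1..n. j * R j)"
  shows "(\<lambda>j. c j + R j) \<in> derangement_vecs n"
proof -
  have cv: "c \<in> cycle_vecs (n - m)" "c 1 = 0" using c by (auto simp: derangement_vecs_def)
  have "(\<Sum>i=1..n. i * c i) = (\<Sum>i=1..n-m. i * c i)"
    by (rule sum.mono_neutral_right) (use cv in \<open>auto simp: cycle_vecs_def\<close>)
  also have "\<dots> = n - m" using cv by (simp add: cycle_vecs_def)
  finally have "(\<Sum>i=1..n. i * (c i + R i)) = n"
    using \<open>m \<le> n\<close> by (simp add: m add_mult_distrib2 sum.distrib)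
  moreover have "1 \<le> i \<and> i \<le> n" if "c i + R i \<noteq> 0" for i
  proof (cases "c i = 0")
    case False
    then have "1 \<le> i \<and> i \<le> n - m" using cv(1) by (simp add: cycle_vecs_def)
    then show ?thesis by (meson diff_le_self order_trans)
  qed (use that supp[of i] in simp)
  moreover have "R 1 = 0" using supp[of 1] by auto
  ultimately show ?thesis using cv(2) by (auto simp: derangement_vecs_def cycle_vecs_def)
qed

lemma bij_betw_derangement_vecs_diff:
  assumes "m \<le> n" and supp: "\<And>j. R j \<noteq> 0 \<Longrightarrow> 2 \<le> j \<and> j \<le> n"
    and m: "m = (\<Sum>j=1..n. j * R j)"
  shows "bij_betw (\<lambda>c j. c j - R j) {c \<in> derangement_vecs n. \<forall>j. R j \<le> c j}
           (derangement_vecs (n - m))"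
proof (rule bij_betw_byWitness[where f' = "\<lambda>c j. c j + R j"])
  show "(\<lambda>c j. c j - R j) ` {c \<in> derangement_vecs n. \<forall>j. R j \<le> c j} \<subseteq> derangement_vecs (n - m)"
    using derangement_vecs_diff m by blast
  show "(\<lambda>c j. c j + R j) ` derangement_vecs (n - m) \<subseteq> {c \<in> derangement_vecs n. \<forall>j. R j \<le> c j}"
    using derangement_vecs_add[OF _ assms] by auto
qed auto

lemma cycle_weight_mult_falling_fact:
  assumes le: "\<And>j. R j \<le> c j"
  shows "cycle_weight \<theta> n c * (\<Prod>j=1..n. falling_fact (c j) (R j)) =
         (\<Prod>j=1..n. (\<theta> / real j) ^ R j) * cycle_weight \<theta> n (\<lambda>j. c j - R j)"
proof -
  have "cycle_weight \<theta> n c * (\<Prod>j=1..n. falling_fact (c j) (R j)) =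
        (\<Prod>j=1..n. (\<theta> / real j) ^ c j / fact (c j) * falling_fact (c j) (R j))"
    unfolding cycle_weight_def by (rule prod.distrib[symmetric])
  also have "\<dots> = (\<Prod>j=1..n. (\<theta> / real j) ^ R j * ((\<theta> / real j) ^ (c j - R j) / fact (c j - R j)))"
    by (rule prod.cong) (use power_div_fact_mult_falling_fact[OF le] in auto)
  also have "\<dots> = (\<Prod>j=1..n. (\<theta> / real j) ^ R j) * cycle_weight \<theta> n (\<lambda>j. c j - R j)"
    unfolding cycle_weight_def by (rule prod.distrib)
  finally show ?thesis .
qed

lemma derangement_factorial_moment_weight:
  fixes R :: "nat \<Rightarrow> nat"
  assumes supp: "\<And>j. R j \<noteq> 0 \<Longrightarrow> 2 \<le> j \<and> j \<le> n"
  defines "m \<equiv> \<Sum>j=1..n. j * R j"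
  shows "(\<Sum>c\<in>derangement_vecs n. cycle_weight \<theta> n c * (\<Prod>j=1..n. falling_fact (c j) (R j))) =
         (if m \<le> n then (\<Prod>j=1..n. (\<theta> / real j) ^ R j) * derangement_weight \<theta> (n - m) else 0)"
proof -
  define S where "S = {c \<in> derangement_vecs n. \<forall>j. R j \<le> c j}"
  define F where "F c = cycle_weight \<theta> n c * (\<Prod>j=1..n. falling_fact (c j) (R j))" for c
  have "F c = 0" if c: "c \<in> derangement_vecs n" "c \<notin> S" for c
  proof -
    obtain j where j: "c j < R j" using c by (auto simp: S_def not_le)
    then have "j \<in> {1..n}" using supp[of j] by auto
    then show ?thesis unfolding F_def using prod_falling_fact_eq_0[of j "{1..n}" c R] j by simp
  qed
  then have red: "(\<Sum>c\<in>derangement_vecs n. F c) = (\<Sum>c\<in>S. F c)"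
    by (intro sum.mono_neutral_right) (auto simp: S_def finite_derangement_vecs)
  show ?thesis
  proof (cases "m \<le> n")
    case False
    then have "S = {}" using derangement_vecs_sum_le unfolding S_def m_def by blast
    then show ?thesis using red False by (simp add: F_def)
  next
    case True
    have "F c = (\<Prod>j=1..n. (\<theta> / real j) ^ R j) * cycle_weight \<theta> (n - m) (\<lambda>j. c j - R j)"
      if "c \<in> S" for c
    proof -
      have c: "c \<in> derangement_vecs n" "\<And>j. R j \<le> c j" using \<open>c \<in> S\<close> by (auto simp: S_def)
      have "(\<lambda>j. c j - R j) \<in> derangement_vecs (n - m)"
        unfolding m_def by (rule derangement_vecs_diff[OF c])
      then have "cycle_weight \<theta> n (\<lambda>j. c j - R j) = cycle_weight \<theta> (n - m) (\<lambda>j. c j - R j)"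
        by (intro cycle_weight_cycle_vecs_mono) (auto simp: derangement_vecs_def)
      then show ?thesis unfolding F_def cycle_weight_mult_falling_fact[OF c(2)] by simp
    qed
    then have "(\<Sum>c\<in>S. F c) = (\<Prod>j=1..n. (\<theta> / real j) ^ R j) *
                 (\<Sum>c\<in>S. cycle_weight \<theta> (n - m) (\<lambda>j. c j - R j))"
      by (simp add: sum_distrib_left)
    also have "(\<Sum>c\<in>S. cycle_weight \<theta> (n - m) (\<lambda>j. c j - R j)) = derangement_weight \<theta> (n - m)"
      unfolding derangement_weight_def S_def
      by (rule sum.reindex_bij_betw[OF bij_betw_derangement_vecs_diff[OF True supp meta_eq_to_obj_eq[OF m_def]]])
    finally show ?thesis using red True by (simp add: F_def)
  qed
qed

lemma derangement_first_moment_weight: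
  assumes "j \<in> {2..k}"
  shows "(\<Sum>c\<in>derangement_vecs k. cycle_weight \<theta> k c * real (c j)) =
         \<theta> / real j * derangement_weight \<theta> (k - j)"
proof -
  let ?R = "\<lambda>i. if i = j then 1 else 0 :: nat"
  have j: "j \<in> {1..k}" using assms by auto
  have "(\<Prod>i=1..k. falling_fact (c i) (?R i)) = real (c j)" for c
    using j by (simp add: if_distrib prod.If_cases)
  moreover have "(\<Prod>i=1..k. (\<theta> / real i) ^ ?R i) = \<theta> / real j"
    using j by (simp add: if_distrib prod.If_cases)
  moreover have "(\<Sum>i=1..k. i * ?R i) = j"
    using j by (simp add: if_distrib sum.If_cases)
  moreover note derangement_factorial_moment_weight[of ?R k \<theta>]
  ultimately show ?thesis using assms by (simp split: if_splits)
qed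

subsection \<open>The total derangement weight\<close>

lemma derangement_weight_rec:
  "real k * derangement_weight \<theta> k = \<theta> * (\<Sum>j=2..k. derangement_weight \<theta> (k - j))"
proof -
  have k: "real k = (\<Sum>j=2..k. real j * real (c j))" if c: "c \<in> derangement_vecs k" for c
  proof -
    have "(\<Sum>j=1..k. j * c j) = k" "c 1 = 0"
      using c by (simp_all add: derangement_vecs_def cycle_vecs_def)
    moreover have "{1..k} = insert 1 {2..k}" if "k \<noteq> 0" using that by auto
    ultimately have "(\<Sum>j=2..k. j * c j) = k" by (cases "k = 0") auto
    then show ?thesis by (simp flip: of_nat_mult of_nat_sum)
  qed
  have "real k * derangement_weight \<theta> k = (\<Sum>c\<in>derangement_vecs k. cycle_weight \<theta> k c * real k)"
    unfolding derangement_weight_def by (simp add: sum_distrib_left mult.commute)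
  also have "\<dots> = (\<Sum>c\<in>derangement_vecs k. \<Sum>j=2..k. real j * (cycle_weight \<theta> k c * real (c j)))"
    by (rule sum.cong) (auto simp: k sum_distrib_left mult_ac)
  also have "\<dots> = (\<Sum>j=2..k. real j * (\<Sum>c\<in>derangement_vecs k. cycle_weight \<theta> k c * real (c j)))"
    by (subst sum.swap) (simp add: sum_distrib_left)
  also have "\<dots> = \<theta> * (\<Sum>j=2..k. derangement_weight \<theta> (k - j))"
    by (simp add: derangement_first_moment_weight sum_distrib_left)
  finally show ?thesis .
qed

lemma derangement_weight_rec3:
  "real (Suc (Suc k)) * derangement_weight \<theta> (Suc (Suc k)) =
   real (Suc k) * derangement_weight \<theta> (Suc k) + \<theta> * derangement_weight \<theta> k"
proof -
  have "(\<Sum>j=2..Suc (Suc k). derangement_weight \<theta> (Suc (Suc k) - j)) =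
        derangement_weight \<theta> k + (\<Sum>j=Suc 2..Suc (Suc k). derangement_weight \<theta> (Suc (Suc k) - j))"
    by (subst sum.atLeast_Suc_atMost) auto
  also have "(\<Sum>j=Suc 2..Suc (Suc k). derangement_weight \<theta> (Suc (Suc k) - j)) =
             (\<Sum>j=2..Suc k. derangement_weight \<theta> (Suc k - j))"
    by (subst sum.shift_bounds_cl_Suc_ivl) simp
  finally show ?thesis
    using derangement_weight_rec[of "Suc (Suc k)" \<theta>] derangement_weight_rec[of "Suc k" \<theta>]
    by (simp add: distrib_left)
qed

lemma derangement_weight_0: "derangement_weight \<theta> 0 = 1"
proof -
  have "derangement_vecs 0 = {\<lambda>_. 0}" by (auto simp: derangement_vecs_def cycle_vecs_def)
  then show ?thesis by (simp add: derangement_weight_def cycle_weight_def)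
qed

lemma derangement_weight_1: "derangement_weight \<theta> 1 = 0"
  using derangement_weight_rec[of 1 \<theta>] by simp

lemma derangement_weight_pos:
  assumes "\<theta> > 0" "n \<ge> 2"
  shows "derangement_weight \<theta> n > 0"
proof -
  \<comment> \<open>the single \<open>n\<close>-cycle is a derangement\<close>
  let ?e = "\<lambda>i. if i = n then 1 else 0 :: nat"
  have "(\<Sum>j=1..n. j * ?e j) = n" using assms by (simp add: if_distrib sum.If_cases)
  then have e: "?e \<in> derangement_vecs n" using assms by (auto simp: derangement_vecs_def cycle_vecs_def)
  have "cycle_weight \<theta> n ?e \<le> derangement_weight \<theta> n" unfolding derangement_weight_def
    by (rule member_le_sum) (use e cycle_weight_pos[OF assms(1)] finite_derangement_vecs
        in \<open>auto intro: less_imp_le\<close>)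
  then show ?thesis using cycle_weight_pos[OF assms(1)] by (meson less_le_trans)
qed

subsection \<open>The explicit formula for \<open>\<lambda>\<^sub>n\<close>\<close>

text \<open>\<open>lambda_coeff \<theta> k\<close> is the coefficient of \<open>x\<^sup>k\<close> in \<open>e\<^sup>-\<^sup>\<theta>\<^sup>x (1-x)\<^sup>-\<^sup>\<theta>\<close>, the Cauchy product of
  \<open>neg_exp_coeff\<close> and \<open>rising_coeff\<close>; \<open>lambda_coeff_shift\<close> is the part of \<open>(k+1)\<close> times the
  next coefficient that comes from differentiating the factor \<open>(1-x)\<^sup>-\<^sup>\<theta>\<close>.\<close>

definition neg_exp_coeff :: "real \<Rightarrow> nat \<Rightarrow> real" where
  "neg_exp_coeff \<theta> j = (-1) ^ j * \<theta> ^ j / fact j"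

definition rising_coeff :: "real \<Rightarrow> nat \<Rightarrow> real" where
  "rising_coeff \<theta> i = pochhammer \<theta> i / fact i"

definition lambda_coeff :: "real \<Rightarrow> nat \<Rightarrow> real" where
  "lambda_coeff \<theta> k = (\<Sum>j=0..k. neg_exp_coeff \<theta> j * rising_coeff \<theta> (k - j))"

definition lambda_coeff_shift :: "real \<Rightarrow> nat \<Rightarrow> real" where
  "lambda_coeff_shift \<theta> k = (\<Sum>j=0..k. real (k - j) * (neg_exp_coeff \<theta> j * rising_coeff \<theta> (k - j)))"

lemma neg_exp_coeff_Suc: "real (Suc j) * neg_exp_coeff \<theta> (Suc j) = - \<theta> * neg_exp_coeff \<theta> j"
  unfolding neg_exp_coeff_def by (simp del: of_nat_Suc add: field_simps)

lemma rising_coeff_Suc: "real (Suc i) * rising_coeff \<theta> (Suc i) = (\<theta> + real i) * rising_coeff \<theta> i"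
  unfolding rising_coeff_def pochhammer_Suc by (simp del: of_nat_Suc add: field_simps)

lemma lambda_coeff_Suc_split:
  "real (Suc k) * lambda_coeff \<theta> (Suc k) = - \<theta> * lambda_coeff \<theta> k + lambda_coeff_shift \<theta> (Suc k)"
proof -
  let ?t = "\<lambda>k j. neg_exp_coeff \<theta> j * rising_coeff \<theta> (k - j)"
  have "(\<Sum>j=0..Suc k. real j * ?t (Suc k) j) = (\<Sum>j=0..k. real (Suc j) * ?t (Suc k) (Suc j))"
    by (subst sum.atLeast0_atMost_Suc_shift) simp
  also have "\<dots> = - \<theta> * lambda_coeff \<theta> k"
    by (simp only: mult.assoc[symmetric] neg_exp_coeff_Suc diff_Suc_Suc)
       (simp add: lambda_coeff_def sum_distrib_left mult.assoc)
  finally have deriv_left: "(\<Sum>j=0..Suc k. real j * ?t (Suc k) j) = - \<theta> * lambda_coeff \<theta> k" .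
  have "real (Suc k) * lambda_coeff \<theta> (Suc k) =
        (\<Sum>j=0..Suc k. real j * ?t (Suc k) j + real (Suc k - j) * ?t (Suc k) j)"
    unfolding lambda_coeff_def sum_distrib_left
    by (rule sum.cong) (auto simp: of_nat_diff algebra_simps)
  then show ?thesis
    by (simp only: sum.distrib deriv_left lambda_coeff_shift_def)
qed

lemma lambda_coeff_shift_Suc:
  "lambda_coeff_shift \<theta> (Suc k) = \<theta> * lambda_coeff \<theta> k + lambda_coeff_shift \<theta> k"
proof -
  have "real (Suc k - j) * (neg_exp_coeff \<theta> j * rising_coeff \<theta> (Suc k - j)) =
        \<theta> * (neg_exp_coeff \<theta> j * rising_coeff \<theta> (k - j)) +
        real (k - j) * (neg_exp_coeff \<theta> j * rising_coeff \<theta> (k - j))" if "j \<le> k" for j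
  proof -
    have "Suc k - j = Suc (k - j)" using that by simp
    then have "real (Suc k - j) * (neg_exp_coeff \<theta> j * rising_coeff \<theta> (Suc k - j)) =
               neg_exp_coeff \<theta> j * (real (Suc (k - j)) * rising_coeff \<theta> (Suc (k - j)))"
      by (simp only: mult_ac)
    also have "\<dots> = neg_exp_coeff \<theta> j * ((\<theta> + real (k - j)) * rising_coeff \<theta> (k - j))"
      by (simp only: rising_coeff_Suc)
    finally show ?thesis by (simp add: algebra_simps)
  qed
  then have "lambda_coeff_shift \<theta> (Suc k) =
     (\<Sum>j=0..k. \<theta> * (neg_exp_coeff \<theta> j * rising_coeff \<theta> (k - j)) +
                real (k - j) * (neg_exp_coeff \<theta> j * rising_coeff \<theta> (k - j)))"
    unfolding lambda_coeff_shift_def by (subst sum.atLeast0_atMost_Suc) simp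
  then show ?thesis
    by (simp add: sum.distrib lambda_coeff_def lambda_coeff_shift_def sum_distrib_left)
qed

lemma lambda_coeff_Suc: "real (Suc k) * lambda_coeff \<theta> (Suc k) = lambda_coeff_shift \<theta> k"
  using lambda_coeff_Suc_split[of k \<theta>] lambda_coeff_shift_Suc[of \<theta> k] by simp

lemma lambda_coeff_rec3:
  "real (Suc (Suc k)) * lambda_coeff \<theta> (Suc (Suc k)) =
   real (Suc k) * lambda_coeff \<theta> (Suc k) + \<theta> * lambda_coeff \<theta> k"
  using lambda_coeff_Suc[of "Suc k" \<theta>] lambda_coeff_Suc[of k \<theta>] lambda_coeff_shift_Suc[of \<theta> k]
  by simp

lemma derangement_weight_eq_lambda_coeff: "derangement_weight \<theta> k = lambda_coeff \<theta> k"
proof -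
  have "derangement_weight \<theta> k = lambda_coeff \<theta> k \<and>
        derangement_weight \<theta> (Suc k) = lambda_coeff \<theta> (Suc k)"
  proof (induction k)
    case 0
    show ?case using derangement_weight_0 derangement_weight_1
      by (simp add: derangement_weight_0 derangement_weight_1 lambda_coeff_def
          neg_exp_coeff_def rising_coeff_def)
  next
    case (Suc k)
    then have "real (Suc (Suc k)) * derangement_weight \<theta> (Suc (Suc k)) =
               real (Suc (Suc k)) * lambda_coeff \<theta> (Suc (Suc k))"
      by (simp only: derangement_weight_rec3 lambda_coeff_rec3)
    then show ?case using Suc by (simp del: of_nat_Suc)
  qed
  then show ?thesis ..
qed

lemma derangement_weight_eq_esf_lambda:
  assumes "pochhammer \<theta> k \<noteq> 0"
  shows "derangement_weight \<theta> k = esf_lambda \<theta> k * pochhammer \<theta> k / fact k"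
  using assms
  by (simp add: derangement_weight_eq_lambda_coeff esf_lambda_def lambda_coeff_def
      neg_exp_coeff_def rising_coeff_def)

lemma derange_expect_factorial_moment:
  fixes R :: "nat \<Rightarrow> nat"
  assumes "\<theta> > 0" and "n \<ge> 2" and supp: "\<And>j. R j \<noteq> 0 \<Longrightarrow> 2 \<le> j \<and> j \<le> n"
  defines "m \<equiv> \<Sum>j=1..n. j * R j"
  shows "derange_expect \<theta> n (\<lambda>c. \<Prod>j=1..n. falling_fact (c j) (R j)) =
    (if m \<le> n then (\<Prod>j=1..n. (\<theta> / real j) ^ R j) * derangement_weight \<theta> (n - m)
                      / derangement_weight \<theta> n else 0)"
proof -
  define K where "K = fact n / pochhammer \<theta> n"
  have "K \<noteq> 0" unfolding K_def using pochhammer_pos[OF assms(1), of n] by simp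
  have prob: "esf_prob \<theta> n c = K * cycle_weight \<theta> n c" if "c \<in> derangement_vecs n" for c
    using that by (simp add: esf_prob_def derangement_vecs_def K_def cycle_weight_def)
  have "derange_expect \<theta> n (\<lambda>c. \<Prod>j=1..n. falling_fact (c j) (R j)) =
        K * (\<Sum>c\<in>derangement_vecs n. cycle_weight \<theta> n c * (\<Prod>j=1..n. falling_fact (c j) (R j))) /
        (K * derangement_weight \<theta> n)"
    unfolding derange_expect_def derangement_vecs_def[symmetric] derangement_weight_def
    by (simp add: prob sum_distrib_left mult.assoc)
  then show ?thesis
    using \<open>K \<noteq> 0\<close> derangement_factorial_moment_weight[OF supp, where \<theta>=\<theta>] by (simp add: m_def)
qed

lemma derange_expect_falling_fact_prod:
  fixes r :: "nat \<Rightarrow> nat"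
  assumes "\<theta> > 0" and "n \<ge> 2" and "2 \<le> b" and "b \<le> n"
  defines "m \<equiv> \<Sum>j=2..b. j * r j"
  shows "derange_expect \<theta> n (\<lambda>c. \<Prod>j=2..b. falling_fact (c j) (r j)) =
    (if m \<le> n then (\<Prod>j=2..b. (\<theta> / real j) ^ r j) * derangement_weight \<theta> (n - m)
                      / derangement_weight \<theta> n else 0)"
proof -
  define R where "R j = (if j \<in> {2..b} then r j else 0)" for j
  have sub: "{2..b} \<subseteq> {1..n}" using assms by auto
  have restrict: "(\<Prod>j=1..n. f j (R j)) = (\<Prod>j=2..b. f j (r j))" if "\<And>j. f j 0 = 1"
    for f :: "nat \<Rightarrow> nat \<Rightarrow> real"
    using sub that by (auto simp: R_def intro!: prod.mono_neutral_cong_right)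
  have "(\<lambda>c. \<Prod>j=1..n. falling_fact (c j) (R j)) = (\<lambda>c. \<Prod>j=2..b. falling_fact (c j) (r j))"
    by (rule ext, rule restrict) simp
  moreover have "(\<Prod>j=1..n. (\<theta> / real j) ^ R j) = (\<Prod>j=2..b. (\<theta> / real j) ^ r j)"
    by (rule restrict) simp
  moreover have "(\<Sum>j=1..n. j * R j) = m"
    unfolding m_def using sub by (auto simp: R_def intro!: sum.mono_neutral_cong_right)
  moreover have "derange_expect \<theta> n (\<lambda>c. \<Prod>j=1..n. falling_fact (c j) (R j)) =
        (if (\<Sum>j=1..n. j * R j) \<le> n then (\<Prod>j=1..n. (\<theta> / real j) ^ R j) *
           derangement_weight \<theta> (n - (\<Sum>j=1..n. j * R j)) / derangement_weight \<theta> n else 0)"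
    by (rule derange_expect_factorial_moment) (use assms in \<open>auto simp: R_def split: if_splits\<close>)
  ultimately show ?thesis by simp
qed

lemma derange_expect_cycle_count:
  assumes "\<theta> > 0" and "n \<ge> 2" and "j \<in> {2..n}"
  shows "derange_expect \<theta> n (\<lambda>c. real (c j)) =
         \<theta> / real j * derangement_weight \<theta> (n - j) / derangement_weight \<theta> n"
proof -
  let ?r = "\<lambda>i. if i = j then 1 else 0 :: nat"
  have single: "(\<Prod>i=2..j. f i (?r i)) = f j 1" if "\<And>i. f i 0 = 1" for f :: "nat \<Rightarrow> nat \<Rightarrow> real"
    using assms(3) that by (simp add: if_distrib prod.If_cases)
  have "(\<lambda>c. \<Prod>i=2..j. falling_fact (c i) (?r i)) = (\<lambda>c. real (c j))"
    by (rule ext, subst single) simp_all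
  moreover have "(\<Prod>i=2..j. (\<theta> / real i) ^ ?r i) = \<theta> / real j"
    by (subst single) simp_all
  moreover have "(\<Sum>i=2..j. i * ?r i) = j"
    using assms(3) by (simp add: if_distrib sum.If_cases)
  ultimately show ?thesis
    using derange_expect_falling_fact_prod[OF assms(1,2), of j ?r] assms(3) by simp
qed

theorem mainTheorem9:
  fixes \<theta> :: real and n b :: nat and r :: "nat \<Rightarrow> nat"
  assumes "\<theta> > 0" and "n \<ge> 2" and "2 \<le> b" and "b \<le> n"
  shows "derange_expect \<theta> n (\<lambda>c. \<Prod>j=2..b. falling_fact (c j) (r j)) =
           (let m = (\<Sum>j=2..b. j * r j) in
              (if m \<le> n then 1 else 0) *
              (fact n / (esf_lambda \<theta> n * pochhammer \<theta> n)) *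
              (esf_lambda \<theta> (n - m) * pochhammer \<theta> (n - m) / fact (n - m)) *
              (\<Prod>j=2..b. (\<theta> / real j) ^ r j)) \<and>
         (\<forall>j\<in>{2..n}. derange_expect \<theta> n (\<lambda>c. real (c j)) =
           fact n / (esf_lambda \<theta> n * pochhammer \<theta> n) *
           (esf_lambda \<theta> (n - j) * pochhammer \<theta> (n - j) / fact (n - j)) * (\<theta> / real j))"
proof -
  have W: "esf_lambda \<theta> k * pochhammer \<theta> k / fact k = derangement_weight \<theta> k" for k
    using derangement_weight_eq_esf_lambda[of \<theta> k] pochhammer_pos[OF assms(1), of k] by simp
  have "esf_lambda \<theta> n * pochhammer \<theta> n = derangement_weight \<theta> n * fact n"
    using W[of n] by (simp add: field_simps)
  then have Wn: "fact n / (esf_lambda \<theta> n * pochhammer \<theta> n) = 1 / derangement_weight \<theta> n"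
    using derangement_weight_pos[OF assms(1,2)] by simp
  show ?thesis
    using derange_expect_falling_fact_prod[OF assms, of r] derange_expect_cycle_count[OF assms(1,2)]
    by (simp add: Let_def W Wn mult_ac)
qed

end
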